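(* Let $U\subseteq\mathbb{R}^d$ be a U-shaped convex set, let $U^*$ be its projective dual, and let $\varepsilon>0$. Let $q$ be an (augmented) point of $\overline{\partial}U$ and let $p$ be its corresponding point on $\overline{\partial}U^*$. Then an (augmented) point $p'\in\overline{\partial}U^*$ lies in $\mathrm{Cap}_\varepsilon(p)(U^* )$ if and only if its corresponding point $q'\in\overline{\partial}U$ lies in $\mathrm{DCap}_\varepsilon(q)(U)$.
   Context: Coordinates in $\mathbb{R}^d$ are $(x_1,\dots,x_{d-1},y)$; the $y$-direction is called vertical (upward). A closed convex set $U$ is U-shaped if for every boundary point of $U$ the upward vertical ray from it lies in $U$. The lower boundary $\overline{\partial}U$ is the set of boundary points of $U$ having a non-vertical supporting hyperplane; its points are augmented: each point $q$ is paired with a non-vertical supporting hyperplane $h(q)$ of $U$ at $q$ (a point with several such hyperplanes gives several augmented points). For a point $q$, $q\pm\varepsilon$ denotes its vertical translate by $\pm\varepsilon$, and similarly for sets. The projective dual of a point $p=(p_1,\dots,p_d)$ is the non-vertical hyperplane $p^*: y=\sum_{j=1}^{d-1}p_jx_j-p_d$, and the dual of a non-vertical hyperplane is defined so that $p^{**}=p$. The dual $U^*$ is the intersection of the closed upper halfspaces of $q^*$ over all $q\in\overline{\partial}U$; it is U-shaped. The augmented point $q$ with hyperplane $h(q)$ corresponds to the augmented point $h(q)^*$ of $\overline{\partial}U^*$ with supporting hyperplane $q^*$; this is a bijection. The $\varepsilon$-cap $\mathrm{Cap}_\varepsilon(q)(U)$ is the set of augmented points of $\overline{\partial}U$ lying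 in the closed lower halfspace of $h(q)+\varepsilon$. The $\varepsilon$-dual cap $\mathrm{DCap}_\varepsilon(q)(U)$ is the set of augmented points $p\in\overline{\partial}U$ such that $q-\varepsilon$ lies in the closed lower halfspace of $h(p)$. *)

theory Defs
  imports "HOL-Analysis.Analysis"
begin

text \<open>Points of R^d are pairs (x, y) with x :: 'a (the first d-1 coordinates,
  'a a Euclidean space) and y :: real (the vertical coordinate).
  A non-vertical hyperplane  y = <a,x> - b  is represented by its coefficient
  pair (a, b) :: 'a \<times> real.\<close>

definition hyperplane :: "'a::euclidean_space \<times> real \<Rightarrow> ('a \<times> real) set" where
  "hyperplane c = {(x, y). y = fst c \<bullet> x - snd c}"

definition upper_hs :: "'a::euclidean_space \<times> real \<Rightarrow> ('a \<times> real) set" where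
  "upper_hs c = {(x, y). y \<ge> fst c \<bullet> x - snd c}"

definition lower_hs :: "'a::euclidean_space \<times> real \<Rightarrow> ('a \<times> real) set" where
  "lower_hs c = {(x, y). y \<le> fst c \<bullet> x - snd c}"

text \<open>Vertical translate of a hyperplane / point by e (upward for e > 0).\<close>
definition hshift :: "'a::euclidean_space \<times> real \<Rightarrow> real \<Rightarrow> 'a \<times> real" where
  "hshift c e = (fst c, snd c - e)"

definition vshift :: "'a::euclidean_space \<times> real \<Rightarrow> real \<Rightarrow> 'a \<times> real" where
  "vshift q e = (fst q, snd q + e)"

text \<open>Projective duality: the dual of the point p = (p', p_d) is the hyperplane
  y = <p',x> - p_d, whose coefficient pair is p itself; the dual of the hyperplane
  with coefficients c is the point c, so that p** = p.\<close>
definition pdual :: "'a::euclidean_space \<times> real \<Rightarrow> 'a \<times> real" where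
  "pdual p = p"

definition hdual :: "'a::euclidean_space \<times> real \<Rightarrow> 'a \<times> real" where
  "hdual c = c"

definition U_shaped :: "('a::euclidean_space \<times> real) set \<Rightarrow> bool" where
  "U_shaped U \<longleftrightarrow> closed U \<and> convex U \<and>
     (\<forall>q \<in> frontier U. \<forall>t \<ge> 0. vshift q t \<in> U)"

definition supporting :: "('a::euclidean_space \<times> real) set \<Rightarrow> 'a \<times> real \<Rightarrow> 'a \<times> real \<Rightarrow> bool" where
  "supporting U q c \<longleftrightarrow> q \<in> U \<and> q \<in> hyperplane c \<and> (U \<subseteq> upper_hs c \<or> U \<subseteq> lower_hs c)"

definition aug_lower :: "('a::euclidean_space \<times> real) set \<Rightarrow> (('a \<times> real) \<times> ('a \<times> real)) set" where
  "aug_lower U = {(q, c). q \<in> frontier U \<and> supporting U q c}"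

definition lower_boundary :: "('a::euclidean_space \<times> real) set \<Rightarrow> ('a \<times> real) set" where
  "lower_boundary U = fst ` aug_lower U"

definition dual_set :: "('a::euclidean_space \<times> real) set \<Rightarrow> ('a \<times> real) set" where
  "dual_set U = (\<Inter>q \<in> lower_boundary U. upper_hs (pdual q))"

definition corr :: "('a::euclidean_space \<times> real) \<times> ('a \<times> real) \<Rightarrow> ('a \<times> real) \<times> ('a \<times> real)" where
  "corr a = (hdual (snd a), pdual (fst a))"

definition Cap :: "real \<Rightarrow> ('a::euclidean_space \<times> real) \<times> ('a \<times> real) \<Rightarrow> ('a \<times> real) set
     \<Rightarrow> (('a \<times> real) \<times> ('a \<times> real)) set" where
  "Cap e a U = {p \<in> aug_lower U. fst p \<in> lower_hs (hshift (snd a) e)}"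

definition DCap :: "real \<Rightarrow> ('a::euclidean_space \<times> real) \<times> ('a \<times> real) \<Rightarrow> ('a \<times> real) set
     \<Rightarrow> (('a \<times> real) \<times> ('a \<times> real)) set" where
  "DCap e a U = {p \<in> aug_lower U. vshift (fst a) (- e) \<in> lower_hs (snd p)}"

end

theory Submission
  imports Defs
begin

text \<open>Corresponding augmented points differ only by swapping point and hyperplane, so the two
  cap conditions are the same linear inequality; what has to be shown is that the
  correspondence maps the lower boundary of U* back into that of U. Let (c', q) lie on
  the lower boundary of U*. Then U lies above c': otherwise minimizing the height above c'
  plus a quadratic penalty in the horizontal distance to a point of U below c' yields a
  lower boundary point below c' (the penalty makes the supporting hyperplane at the
  minimizer non-vertical). And q lies in U: a hyperplane separating q from U may be vertical,
  but tilting c' slightly towards it gives a member of U* strictly above q.\<close>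

lemma square_le_linear_bound:
  fixes d A B :: real
  assumes "0 \<le> d" "d\<^sup>2 \<le> A + B * d"
  shows "d \<le> \<bar>A\<bar> + \<bar>B\<bar> + 1"
proof (rule ccontr)
  assume "\<not> ?thesis"
  then have big: "\<bar>A\<bar> + \<bar>B\<bar> + 1 < d" by simp
  then have "(\<bar>A\<bar> + \<bar>B\<bar> + 1) * d < d * d"
    by (intro mult_strict_right_mono) auto
  moreover have "A \<le> \<bar>A\<bar> * d"
  proof -
    have "1 \<le> d" using big abs_ge_zero[of A] abs_ge_zero[of B] by linarith
    then show ?thesis using mult_left_mono[of 1 d "\<bar>A\<bar>"] abs_ge_self[of A] by simp
  qed
  moreover have "B * d \<le> \<bar>B\<bar> * d"
    using assms(1) by (simp add: mult_right_mono)
  ultimately show False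
    using assms unfolding power2_eq_square by (simp add: algebra_simps)
qed

lemma nonneg_if_quadratic_nonneg:
  fixes A B :: real
  assumes "\<And>t. 0 < t \<Longrightarrow> t \<le> 1 \<Longrightarrow> 0 \<le> t * A + t\<^sup>2 * B"
  shows "0 \<le> A"
proof (rule ccontr)
  assume "\<not> 0 \<le> A"
  define t where "t = min 1 (- A / (2 * \<bar>B\<bar> + 1))"
  have t: "0 < t" "t \<le> 1"
    using \<open>\<not> 0 \<le> A\<close> by (auto simp: t_def divide_neg_pos)
  have "t \<le> - A / (2 * \<bar>B\<bar> + 1)" by (simp add: t_def)
  then have "t * (2 * \<bar>B\<bar> + 1) \<le> - A"
    using pos_le_divide_eq[of "2 * \<bar>B\<bar> + 1" t "- A"] by simp
  moreover have "t * \<bar>B\<bar> \<le> t * (2 * \<bar>B\<bar>)"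
    using t by (intro mult_left_mono) auto
  moreover have "t * (2 * \<bar>B\<bar> + 1) = t * (2 * \<bar>B\<bar>) + t"
    by (simp add: distrib_left)
  ultimately have "t * \<bar>B\<bar> < - A"
    using t by linarith
  then have "t * (A + t * \<bar>B\<bar>) < 0"
    using t by (simp add: mult_pos_neg)
  moreover have "t * A + t\<^sup>2 * B \<le> t * (A + t * \<bar>B\<bar>)"
    using t by (simp add: power2_eq_square algebra_simps mult_left_mono)
  ultimately show False using assms[OF t] by linarith
qed

lemma mem_upper_hs: "p \<in> upper_hs c \<longleftrightarrow> fst c \<bullet> fst p - snd c \<le> snd p"
  by (cases p) (simp add: upper_hs_def)

lemma mem_lower_hs: "p \<in> lower_hs c \<longleftrightarrow> snd p \<le> fst c \<bullet> fst p - snd c"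
  by (cases p) (simp add: lower_hs_def)

lemma mem_hyperplane: "p \<in> hyperplane c \<longleftrightarrow> snd p = fst c \<bullet> fst p - snd c"
  by (cases p) (simp add: hyperplane_def)

lemma mem_upper_hs_commute: "p \<in> upper_hs c \<longleftrightarrow> c \<in> upper_hs p"
  by (auto simp: mem_upper_hs inner_commute)

lemma mem_hyperplane_commute: "p \<in> hyperplane c \<longleftrightarrow> c \<in> hyperplane p"
  by (auto simp: mem_hyperplane inner_commute)

lemma mem_dual_set_iff: "c \<in> dual_set U \<longleftrightarrow> lower_boundary U \<subseteq> upper_hs c"
  by (auto simp: dual_set_def pdual_def mem_upper_hs_commute)

lemma lower_boundary_subset: "lower_boundary U \<subseteq> U"
  by (auto simp: lower_boundary_def aug_lower_def supporting_def)

lemma vshift_mem_dual_set: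
  assumes "c \<in> dual_set U" "0 \<le> t"
  shows "vshift c t \<in> dual_set U"
  using assms by (auto simp: dual_set_def pdual_def vshift_def mem_upper_hs)

lemma supporting_subset_upper_hs:
  assumes "supporting U q c" "0 < t" "vshift q t \<in> U"
  shows "U \<subseteq> upper_hs c"
proof -
  have "vshift q t \<notin> lower_hs c"
    using assms by (simp add: supporting_def vshift_def mem_lower_hs mem_hyperplane)
  then show ?thesis
    using assms(1,3) by (auto simp: supporting_def)
qed

lemma supporting_point_in_frontier:
  fixes U :: "('a::euclidean_space \<times> real) set"
  assumes "p \<in> U" "p \<in> hyperplane c" "U \<subseteq> upper_hs c"
  shows "p \<in> frontier U"
proof -
  have "vshift p (- r) \<in> cball p r" if "0 < r" for r
    using that by (cases p) (simp add: vshift_def dist_Pair_Pair dist_real_def)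
  moreover have "vshift p (- r) \<notin> U" if "0 < r" for r
    using assms that by (auto simp: vshift_def mem_upper_hs mem_hyperplane)
  ultimately have "p \<notin> interior U"
    by (meson mem_interior_cball subsetD)
  then show ?thesis
    using assms(1) closure_subset by (auto simp: frontier_def)
qed

lemma aug_lower_if_supporting_below:
  fixes U :: "('a::euclidean_space \<times> real) set"
  assumes "p \<in> U" "p \<in> hyperplane c" "U \<subseteq> upper_hs c"
  shows "(p, c) \<in> aug_lower U"
  using assms supporting_point_in_frontier[OF assms] by (simp add: aug_lower_def supporting_def)

lemma bounded_slab:
  fixes S :: "'a::euclidean_space set"
  assumes "bounded S"
  shows "bounded ((S \<times> UNIV) \<inter> upper_hs c \<inter> lower_hs d)"
proof -
  obtain r where r: "\<And>x. x \<in> S \<Longrightarrow> norm x \<le> r"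
    using assms by (auto simp: bounded_iff)
  have "norm p \<le> r + ((norm (fst c) + norm (fst d)) * r + \<bar>snd c\<bar> + \<bar>snd d\<bar>)"
    if "p \<in> (S \<times> UNIV) \<inter> upper_hs c \<inter> lower_hs d" for p
  proof -
    obtain x y where p: "p = (x, y)"
      by (cases p)
    have x: "x \<in> S" and y: "fst c \<bullet> x - snd c \<le> y" "y \<le> fst d \<bullet> x - snd d"
      using that p by (auto simp: mem_upper_hs mem_lower_hs)
    have "\<bar>a \<bullet> x\<bar> \<le> norm a * r" for a
      using Cauchy_Schwarz_ineq2[of a x] mult_left_mono[OF r[OF x], of "norm a"] by simp
    then have "\<bar>y\<bar> \<le> (norm (fst c) + norm (fst d)) * r + \<bar>snd c\<bar> + \<bar>snd d\<bar>"
      using y by (smt (verit) distrib_right)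
    then show ?thesis
      using norm_Pair_le[of x y] r[OF x] p by simp
  qed
  then show ?thesis
    unfolding bounded_iff by blast
qed

lemma bounded_penalized_sublevel:
  fixes w x0 :: "'a::euclidean_space"
  shows "bounded (upper_hs c \<inter> {p. snd p - w \<bullet> fst p + (norm (fst p - x0))\<^sup>2 \<le> m})"
    (is "bounded ?K")
proof -
  define A where "A = m + snd c + (w - fst c) \<bullet> x0"
  define B where "B = norm (w - fst c)"
  have "?K \<subseteq> (cball x0 (\<bar>A\<bar> + \<bar>B\<bar> + 1) \<times> UNIV) \<inter> upper_hs c \<inter> lower_hs (w, - m)"
  proof
    fix p assume "p \<in> ?K"
    then obtain x y where p: "p = (x, y)" and y: "fst c \<bullet> x - snd c \<le> y"
      and sub: "y - w \<bullet> x + (norm (x - x0))\<^sup>2 \<le> m"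
      by (cases p) (auto simp: mem_upper_hs)
    have "(w - fst c) \<bullet> (x - x0) \<le> B * norm (x - x0)"
      unfolding B_def by (rule norm_cauchy_schwarz)
    then have "(norm (x - x0))\<^sup>2 \<le> A + B * norm (x - x0)"
      using y sub by (simp add: A_def inner_diff_left inner_diff_right)
    then have "dist x0 x \<le> \<bar>A\<bar> + \<bar>B\<bar> + 1"
      by (simp add: dist_norm square_le_linear_bound norm_minus_commute)
    moreover have "y \<le> w \<bullet> x + m"
      using sub zero_le_power2[of "norm (x - x0)"] by linarith
    ultimately show "p \<in> (cball x0 (\<bar>A\<bar> + \<bar>B\<bar> + 1) \<times> UNIV) \<inter> upper_hs c \<inter> lower_hs (w, - m)"
      using p y by (simp add: mem_upper_hs mem_lower_hs)
  qed
  then show ?thesis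
    using bounded_slab[OF bounded_cball] bounded_subset by blast
qed

lemma penalized_minimizer_supporting:
  fixes U :: "('a::euclidean_space \<times> real) set" and w x0 :: 'a
  defines "\<psi> \<equiv> \<lambda>p. snd p - w \<bullet> fst p + (norm (fst p - x0))\<^sup>2"
  assumes "convex U" "ps \<in> U" "\<And>u. u \<in> U \<Longrightarrow> \<psi> ps \<le> \<psi> u"
  defines "a \<equiv> w - 2 *\<^sub>R (fst ps - x0)"
  shows "U \<subseteq> upper_hs (a, a \<bullet> fst ps - snd ps)"
proof
  fix u assume "u \<in> U"
  define A where "A = (snd u - a \<bullet> fst u) - (snd ps - a \<bullet> fst ps)"
  define B where "B = (norm (fst u - fst ps))\<^sup>2"
  have expand: "\<psi> (ps + t *\<^sub>R (u - ps)) - \<psi> ps = t * A + t\<^sup>2 * B" for t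
    unfolding \<psi>_def a_def A_def B_def power2_norm_eq_inner
    by (simp add: inner_add_left inner_add_right inner_diff_left
        inner_diff_right algebra_simps power2_eq_square inner_commute)
  have "0 \<le> t * A + t\<^sup>2 * B" if "0 < t" "t \<le> 1" for t
  proof -
    have "ps + t *\<^sub>R (u - ps) = (1 - t) *\<^sub>R ps + t *\<^sub>R u"
      by (simp add: algebra_simps)
    also have "\<dots> \<in> U"
      using assms(2,3) \<open>u \<in> U\<close> that by (simp add: convex_def)
    finally show ?thesis
      using assms(4) expand[of t] by fastforce
  qed
  then have "0 \<le> A"
    by (rule nonneg_if_quadratic_nonneg)
  then show "u \<in> upper_hs (a, a \<bullet> fst ps - snd ps)"
    by (simp add: A_def mem_upper_hs)
qed

lemma subset_upper_hs_if_lower_boundary_above: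
  fixes U :: "('a::euclidean_space \<times> real) set"
  assumes "closed U" "convex U" "U \<subseteq> upper_hs c" "lower_boundary U \<subseteq> upper_hs c'"
  shows "U \<subseteq> upper_hs c'"
proof
  fix z assume "z \<in> U"
  show "z \<in> upper_hs c'"
  proof (rule ccontr)
    assume "z \<notin> upper_hs c'"
    define \<psi> where "\<psi> p = snd p - fst c' \<bullet> fst p + (norm (fst p - fst z))\<^sup>2" for p
    define K where "K = U \<inter> {p. \<psi> p \<le> \<psi> z}"
    have cont: "continuous_on UNIV \<psi>"
      unfolding \<psi>_def by (intro continuous_intros)
    have "closed K"
      unfolding K_def by (intro closed_Int assms(1) closed_Collect_le cont continuous_on_const)
    moreover have "K \<subseteq> upper_hs c \<inter> {p. \<psi> p \<le> \<psi> z}"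
      using assms(3) by (auto simp: K_def)
    then have "bounded K"
      using bounded_penalized_sublevel bounded_subset unfolding \<psi>_def by blast
    ultimately have "compact K"
      by (simp add: compact_eq_bounded_closed)
    moreover have "z \<in> K"
      using \<open>z \<in> U\<close> by (simp add: K_def)
    ultimately obtain ps where ps: "ps \<in> K" "\<And>u. u \<in> K \<Longrightarrow> \<psi> ps \<le> \<psi> u"
      using continuous_attains_inf[of K \<psi>] continuous_on_subset[OF cont] by blast
    have "\<psi> ps \<le> \<psi> u" if "u \<in> U" for u
      using ps that by (cases "u \<in> K") (auto simp: K_def)
    moreover define a where "a = fst c' - 2 *\<^sub>R (fst ps - fst z)"
    ultimately have "U \<subseteq> upper_hs (a, a \<bullet> fst ps - snd ps)"
      using penalized_minimizer_supporting[OF assms(2)] ps(1) unfolding \<psi>_def K_def by blast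
    moreover have "ps \<in> U" "ps \<in> hyperplane (a, a \<bullet> fst ps - snd ps)"
      using ps(1) by (simp_all add: K_def mem_hyperplane)
    ultimately have "(ps, (a, a \<bullet> fst ps - snd ps)) \<in> aug_lower U"
      using aug_lower_if_supporting_below by blast
    then have "ps \<in> upper_hs c'"
      using assms(4) unfolding lower_boundary_def by force
    moreover have "\<psi> ps \<le> \<psi> z"
      using ps(1) by (simp add: K_def)
    ultimately show False
      using \<open>z \<notin> upper_hs c'\<close> zero_le_power2[of "norm (fst ps - fst z)"]
      by (simp add: \<psi>_def mem_upper_hs)
  qed
qed

lemma mem_upper_hs_scaleR_iff:
  assumes "0 < k"
  shows "p \<in> upper_hs ((1 / k) *\<^sub>R a, b / k) \<longleftrightarrow> a \<bullet> fst p - b \<le> k * snd p"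
  using assms by (simp add: mem_upper_hs divide_le_eq diff_divide_distrib[symmetric] mult.commute)

lemma mem_if_supports_dual_set:
  fixes U :: "('a::euclidean_space \<times> real) set"
  assumes "closed U" "convex U" "c \<in> dual_set U" "q \<in> hyperplane c" "dual_set U \<subseteq> upper_hs q"
  shows "q \<in> U"
proof (rule ccontr)
  assume "q \<notin> U"
  then obtain n \<beta> where n: "n \<bullet> q < \<beta>" "\<And>x. x \<in> U \<Longrightarrow> \<beta> < n \<bullet> x"
    using separating_hyperplane_closed_point[OF assms(2,1)] by blast
  obtain w \<alpha> where nw: "n = (w, \<alpha>)"
    by (cases n)
  define \<mu> where "\<mu> = 1 / (1 + \<bar>\<alpha>\<bar>)"
  have \<mu>: "0 < \<mu>" "0 < 1 + \<mu> * \<alpha>"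
    using abs_ge_minus_self[of \<alpha>] by (auto simp: \<mu>_def field_simps)
  define c2 where "c2 = ((1 / (1 + \<mu> * \<alpha>)) *\<^sub>R (fst c - \<mu> *\<^sub>R w), (snd c - \<mu> * \<beta>) / (1 + \<mu> * \<alpha>))"
  have tilt: "p \<in> upper_hs c2 \<longleftrightarrow>
      0 \<le> (snd p - fst c \<bullet> fst p + snd c) + \<mu> * (w \<bullet> fst p + \<alpha> * snd p - \<beta>)" for p
    unfolding c2_def mem_upper_hs_scaleR_iff[OF \<mu>(2)]
    by (simp add: inner_diff_left algebra_simps)
  have "p \<in> upper_hs c2" if "p \<in> lower_boundary U" for p
  proof -
    have "p \<in> upper_hs c"
      using assms(3) that by (auto simp: mem_dual_set_iff)
    moreover have "p \<in> U"
      using lower_boundary_subset that by blast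
    then have "\<beta> < w \<bullet> fst p + \<alpha> * snd p"
      using n(2) nw by (cases p) auto
    ultimately show ?thesis
      unfolding tilt using \<mu>(1) by (simp add: mem_upper_hs)
  qed
  then have "c2 \<in> dual_set U"
    by (auto simp: mem_dual_set_iff)
  then have "q \<in> upper_hs c2"
    using assms(5) mem_upper_hs_commute by blast
  moreover have "w \<bullet> fst q + \<alpha> * snd q < \<beta>"
    using n(1) nw by (cases q) auto
  ultimately show False
    unfolding tilt using \<mu>(1) assms(4)
    by (simp add: mem_hyperplane zero_le_mult_iff)
qed

lemma aug_lower_if_corr_mem_aug_lower_dual_set:
  fixes U :: "('a::euclidean_space \<times> real) set"
  assumes "closed U" "convex U" "U \<subseteq> upper_hs c" "corr q' \<in> aug_lower (dual_set U)"
  shows "q' \<in> aug_lower U"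
proof -
  obtain q0 c' where q': "q' = (q0, c')"
    by (cases q')
  have "supporting (dual_set U) c' q0"
    using assms(4) by (simp add: q' corr_def hdual_def pdual_def aug_lower_def)
  then have c': "c' \<in> dual_set U" "c' \<in> hyperplane q0" "supporting (dual_set U) c' q0"
    by (simp_all add: supporting_def)
  have "dual_set U \<subseteq> upper_hs q0"
    using supporting_subset_upper_hs[OF c'(3) zero_less_one vshift_mem_dual_set[OF c'(1) zero_le_one]] .
  then have "q0 \<in> U"
    using mem_if_supports_dual_set[OF assms(1,2) c'(1)] c'(2) mem_hyperplane_commute by blast
  moreover have "U \<subseteq> upper_hs c'"
    using subset_upper_hs_if_lower_boundary_above[OF assms(1-3)] c'(1) mem_dual_set_iff by blast
  ultimately show ?thesis
    using aug_lower_if_supporting_below c'(2) mem_hyperplane_commute q' by blast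
qed

lemma corr_lower_hs_hshift_iff:
  "fst (corr q') \<in> lower_hs (hshift (snd (corr q)) e) \<longleftrightarrow> vshift (fst q) (- e) \<in> lower_hs (snd q')"
  by (auto simp: corr_def hdual_def pdual_def hshift_def vshift_def mem_lower_hs inner_commute)

theorem lemma6:
  fixes U :: "('a::euclidean_space \<times> real) set"
    and e :: real
    and q :: "('a \<times> real) \<times> ('a \<times> real)"
  assumes "U_shaped U" and "e > 0" and "q \<in> aug_lower U"
  shows "\<forall>p' q'. p' \<in> aug_lower (dual_set U) \<longrightarrow> corr q' = p' \<longrightarrow>
           (p' \<in> Cap e (corr q) (dual_set U) \<longleftrightarrow> q' \<in> DCap e q U)"
proof (intro allI impI)
  fix p' q'
  assume p': "p' \<in> aug_lower (dual_set U)" and "corr q' = p'"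
  obtain q0 c where q: "q = (q0, c)"
    by (cases q)
  have U: "closed U" "convex U" "vshift q0 1 \<in> U"
    using assms(1,3) q by (auto simp: U_shaped_def aug_lower_def)
  have "U \<subseteq> upper_hs c"
    using assms(3) supporting_subset_upper_hs[OF _ _ U(3)] q by (simp add: aug_lower_def)
  then have "q' \<in> aug_lower U"
    using aug_lower_if_corr_mem_aug_lower_dual_set[OF U(1,2)] p' \<open>corr q' = p'\<close> by blast
  then show "p' \<in> Cap e (corr q) (dual_set U) \<longleftrightarrow> q' \<in> DCap e q U"
    using p' \<open>corr q' = p'\<close>[symmetric] by (simp add: Cap_def DCap_def corr_lower_hs_hshift_iff)
qed

end
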